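(* Let $\mathcal{G}_D=(\mathcal{V}_D,\mathcal{E}_D)$ be a connected finite undirected graph with $n$ nodes, $m$ edges, and a set of $n_g$ source nodes $\mathcal{V}_g\subset\mathcal{V}_D$, the remaining nodes being sinks. Let supplies $g_i>0$ ($i\in\mathcal{V}_g$, zero otherwise), demands $d_j>0$ ($j\notin\mathcal{V}_g$, zero otherwise) with $\sum_i g_i=\sum_j d_j$, and capacities $\bar{x}_{i,j}\ge0$ on edges be given. Call a set $\mathcal{S}$ of directed edges a feasible distribution configuration if each element of $\mathcal{S}$ is an orientation of an edge of $\mathcal{E}_D$, the directed graph $(\mathcal{V}_D,\mathcal{S})$ is a polyforest (its underlying undirected graph is a forest), and there exist flows $x_{i,j}>0$, $(i\to j)\in\mathcal{S}$, with $x_{i,j}\le\bar{x}_{i,j}$ and $\sum_{(k\to j)\in\mathcal{S}}x_{k,j}-\sum_{(i\to k)\in\mathcal{S}}x_{i,k}=g_k-d_k$ for every node $k$. Then the number of feasible distribution configurations is at most $\det(\mathcal{L}'(\mathcal{G}_D))$, where $\mathcal{L}'(\mathcal{G}_D)$ is a cofactor of the Laplacian matrix of $\mathcal{G}_D$ (the Laplacian with one row and the corresponding column deleted).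
   Context: A polyforest is a directed acyclic graph whose underlying undirected graph is a forest. The Laplacian of $\mathcal{G}_D$ is $D-A$ with $D$ the degree matrix and $A$ the adjacency matrix. *)

theory Defs
  imports "Jordan_Normal_Form.Determinant"
begin

definition simple_graph :: "nat \<Rightarrow> nat set set \<Rightarrow> bool" where
  "simple_graph n E \<longleftrightarrow> (\<forall>e\<in>E. \<exists>a b. e = {a, b} \<and> a \<noteq> b \<and> a < n \<and> b < n)"

definition connected_graph :: "nat \<Rightarrow> nat set set \<Rightarrow> bool" where
  "connected_graph n E \<longleftrightarrow> 0 < n \<and>
     (\<forall>u<n. \<forall>v<n. (u, v) \<in> {(a, b). {a, b} \<in> E}\<^sup>*)"

definition laplacian :: "nat \<Rightarrow> nat set set \<Rightarrow> real mat" where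
  "laplacian n E = mat n n (\<lambda>(i, j).
      if i = j then real (card {k. k < n \<and> {i, k} \<in> E})
      else if {i, j} \<in> E then -1 else 0)"

definition underlying :: "(nat \<times> nat) set \<Rightarrow> nat set set" where
  "underlying S = {{i, j} | i j. (i, j) \<in> S}"

definition has_cycle :: "nat set set \<Rightarrow> bool" where
  "has_cycle U \<longleftrightarrow> (\<exists>vs. length vs \<ge> 3 \<and> distinct vs \<and>
      (\<forall>i. Suc i < length vs \<longrightarrow> {vs ! i, vs ! Suc i} \<in> U) \<and>
      {last vs, hd vs} \<in> U)"

definition polyforest :: "(nat \<times> nat) set \<Rightarrow> bool" where
  "polyforest S \<longleftrightarrow> acyclic S \<and> \<not> has_cycle (underlying S)"

definition feasible_config ::
  "nat \<Rightarrow> nat set set \<Rightarrow> (nat \<Rightarrow> real) \<Rightarrow> (nat \<Rightarrow> real) \<Rightarrow> (nat \<Rightarrow> nat \<Rightarrow> real)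
     \<Rightarrow> (nat \<times> nat) set \<Rightarrow> bool" where
  "feasible_config n E g d cap S \<longleftrightarrow>
     (\<forall>(i, j)\<in>S. {i, j} \<in> E) \<and> polyforest S \<and>
     (\<exists>x :: nat \<Rightarrow> nat \<Rightarrow> real.
        (\<forall>(i, j)\<in>S. 0 < x i j \<and> x i j \<le> cap i j) \<and>
        (\<forall>k<n. (\<Sum>j\<in>{j. (k, j) \<in> S}. x k j) - (\<Sum>i\<in>{i. (i, k) \<in> S}. x i k)
                = g k - d k))"

end

theory Submission
  imports Defs
begin

text \<open>The cofactor of the Laplacian counts the spanning trees of the graph.  This matrix-tree
  theorem is proved for the Laplacian grounded at an arbitrary vertex set \<open>R\<close> by deletion and
  contraction of an edge leaving \<open>R\<close>: both sides satisfy the same recursion.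

  A feasible configuration is a polyforest, so its underlying forest extends to a spanning tree,
  which we root at \<open>r\<close>.  The configuration is determined by this tree: flow conservation fixes
  the net flow across every tree edge, by induction from the leaves, and since flows on arcs are
  positive and no edge carries both orientations, each arc of the configuration is the tree edge
  oriented along its net flow.  So choosing such a tree for every configuration is injective.\<close>

section \<open>Grounded Laplacians and the matrix-tree theorem\<close>

lemma simple_graph_edge:
  "simple_graph n E \<Longrightarrow> {a, b} \<in> E \<Longrightarrow> a < n \<and> b < n \<and> a \<noteq> b"
  unfolding simple_graph_def by (force simp: doubleton_eq_iff)

lemma simple_graph_finite: "simple_graph n E \<Longrightarrow> finite E"
  by (rule finite_subset[of _ "Pow {0..<n}"]) (auto simp: simple_graph_def)

lemma simple_graph_Diff: "simple_graph n E \<Longrightarrow> simple_graph n (E - F)"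
  unfolding simple_graph_def by blast

lemma simple_graph_edge_at:
  assumes "simple_graph n T" "e \<in> T" "v \<in> e"
  obtains y where "e = {v, y}" "y < n" "y \<noteq> v"
proof -
  obtain a b where "e = {a, b}" "a \<noteq> b" "a < n" "b < n"
    using assms(1,2) unfolding simple_graph_def by blast
  then show ?thesis using assms(3) that by (auto simp: insert_commute)
qed

lemma laplacian_row_sum:
  assumes "simple_graph n E" and "i < n"
  shows "(\<Sum>j<n. laplacian n E $$ (i, j)) = 0"
proof -
  let ?N = "{k. k < n \<and> {i, k} \<in> E}"
  have "i \<notin> ?N" using simple_graph_edge[OF assms(1)] by blast
  then have "(\<Sum>j<n. laplacian n E $$ (i, j))
      = (\<Sum>j<n. (if j = i then real (card ?N) else 0) - (if j \<in> ?N then 1 else 0))"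
    using assms(2) by (intro sum.cong) (auto simp: laplacian_def)
  also have "\<dots> = real (card ?N) - real (card {j \<in> {..<n}. j \<in> ?N})"
    using assms(2) by (simp add: sum_subtractf sum.inter_filter[symmetric])
  also have "{j \<in> {..<n}. j \<in> ?N} = ?N" by auto
  finally show ?thesis by simp
qed

lemma laplacian_Diff_edge_other_row:
  assumes "i < n" "j < n" "i \<notin> e"
  shows "laplacian n (E - {e}) $$ (i, j) = laplacian n E $$ (i, j)"
proof -
  have ne: "{i, k} \<noteq> e" for k using assms(3) by blast
  then have "{k. k < n \<and> {i, k} \<in> E - {e}} = {k. k < n \<and> {i, k} \<in> E}" by blast
  with ne show ?thesis using assms(1,2) by (cases "i = j") (simp_all add: laplacian_def)
qed

lemma laplacian_Diff_edge_row:
  assumes "simple_graph n E" "{u, v} \<in> E" "j < n" "j \<noteq> v"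
  shows "laplacian n E $$ (u, j) = laplacian n (E - {{u, v}}) $$ (u, j) + (if j = u then 1 else 0)"
proof -
  have u: "u < n" and v: "v < n" using simple_graph_edge[OF assms(1,2)] by auto
  have ne: "{u, k} \<noteq> {u, v}" if "k \<noteq> v" for k using that by (auto simp: doubleton_eq_iff)
  have "{k. k < n \<and> {u, k} \<in> E} = insert v {k. k < n \<and> {u, k} \<in> E - {{u, v}}}"
    using assms(2) v ne by auto
  then have "card {k. k < n \<and> {u, k} \<in> E} = Suc (card {k. k < n \<and> {u, k} \<in> E - {{u, v}}})"
    by simp
  with ne show ?thesis using u assms(3,4) by (cases "j = u") (simp_all add: laplacian_def)
qed

lemma det_eq_plus_row_difference:
  fixes A B :: "'a :: comm_ring_1 mat"
  assumes A: "A \<in> carrier_mat n n" and B: "B \<in> carrier_mat n n" and i: "i < n"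
    and eq: "\<And>k j. k < n \<Longrightarrow> j < n \<Longrightarrow> k \<noteq> i \<Longrightarrow> A $$ (k, j) = B $$ (k, j)"
  shows "det A = det B + (\<Sum>j<n. (A $$ (i, j) - B $$ (i, j)) * cofactor B i j)"
proof -
  have "mat_delete A i j = mat_delete B i j" for j
    using A B eq i unfolding mat_delete_def by (intro eq_matI) auto
  then have "det A = (\<Sum>j<n. A $$ (i, j) * cofactor B i j)"
    using laplace_expansion_row[OF A i] by (simp add: cofactor_def)
  also have "\<dots> = (\<Sum>j<n. B $$ (i, j) * cofactor B i j) + (\<Sum>j<n. (A $$ (i, j) - B $$ (i, j)) * cofactor B i j)"
    by (simp add: sum.distrib[symmetric] algebra_simps)
  finally show ?thesis by (simp add: laplace_expansion_row[OF B i])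
qed

lemma det_unit_row:
  fixes A :: "'a :: comm_ring_1 mat"
  assumes A: "A \<in> carrier_mat n n" and i: "i < n"
    and row: "\<And>j. j < n \<Longrightarrow> A $$ (i, j) = (if j = i then 1 else 0)"
  shows "det A = det (mat_delete A i i)"
proof -
  have "det A = (\<Sum>j<n. if j = i then cofactor A i j else 0)"
    unfolding laplace_expansion_row[OF A i] by (intro sum.cong) (auto simp: row)
  then show ?thesis using i by (simp add: cofactor_def)
qed

definition grounded_laplacian :: "nat \<Rightarrow> nat set \<Rightarrow> nat set set \<Rightarrow> real mat" where
  "grounded_laplacian n R E = mat n n (\<lambda>(i, j).
     if i \<in> R \<or> j \<in> R then (if i = j then 1 else 0) else laplacian n E $$ (i, j))"

lemma grounded_laplacian_carrier [simp]: "grounded_laplacian n R E \<in> carrier_mat n n"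
  by (simp add: grounded_laplacian_def)

lemma det_mat_delete_laplacian:
  assumes "r < n"
  shows "det (mat_delete (laplacian n E) r r) = det (grounded_laplacian n {r} E)"
proof -
  have "mat_delete (grounded_laplacian n {r} E) r r = mat_delete (laplacian n E) r r"
    unfolding mat_delete_def by (intro eq_matI) (auto simp: grounded_laplacian_def laplacian_def)
  moreover have "det (grounded_laplacian n {r} E) = det (mat_delete (grounded_laplacian n {r} E) r r)"
    using assms by (intro det_unit_row) (auto simp: grounded_laplacian_def)
  ultimately show ?thesis by simp
qed

lemma det_grounded_laplacian_Diff_edge:
  assumes sg: "simple_graph n E" and e: "{u, v} \<in> E" and u: "u \<notin> R" and v: "v \<in> R"
  shows "det (grounded_laplacian n R E)
       = det (grounded_laplacian n R (E - {{u, v}})) + det (grounded_laplacian n (insert u R) (E - {{u, v}}))"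
proof -
  have un: "u < n" using simple_graph_edge[OF sg e] by blast
  let ?A = "grounded_laplacian n R E" and ?B = "grounded_laplacian n R (E - {{u, v}})"
    and ?C = "grounded_laplacian n (insert u R) (E - {{u, v}})"
  have "det ?A = det ?B + (\<Sum>j<n. (?A $$ (u, j) - ?B $$ (u, j)) * cofactor ?B u j)"
  proof (rule det_eq_plus_row_difference[OF _ _ un])
    fix k j assume "k < n" "j < n" "k \<noteq> u"
    moreover have "k \<notin> R \<Longrightarrow> k \<notin> {u, v}" using v \<open>k \<noteq> u\<close> by blast
    ultimately show "?A $$ (k, j) = ?B $$ (k, j)"
      by (auto simp: grounded_laplacian_def laplacian_Diff_edge_other_row)
  qed simp_all
  also have "(\<Sum>j<n. (?A $$ (u, j) - ?B $$ (u, j)) * cofactor ?B u j)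
      = (\<Sum>j<n. if j = u then cofactor ?B u j else 0)"
  proof (intro sum.cong)
    fix j assume "j \<in> {..<n}"
    moreover have "j \<notin> R \<Longrightarrow> j \<noteq> v" using v by blast
    ultimately have "?A $$ (u, j) - ?B $$ (u, j) = (if j = u then 1 else 0)"
      using u un laplacian_Diff_edge_row[OF sg e] by (auto simp: grounded_laplacian_def)
    then show "(?A $$ (u, j) - ?B $$ (u, j)) * cofactor ?B u j = (if j = u then cofactor ?B u j else 0)"
      by simp
  qed simp
  also have "\<dots> = det (mat_delete ?B u u)" using un by (simp add: cofactor_def)
  also have "mat_delete ?B u u = mat_delete ?C u u"
    unfolding mat_delete_def by (intro eq_matI) (auto simp: grounded_laplacian_def)
  also have "det (mat_delete ?C u u) = det ?C"
    using un by (intro det_unit_row[symmetric]) (auto simp: grounded_laplacian_def)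
  finally show ?thesis .
qed

lemma det_grounded_laplacian_all:
  assumes "{0..<n} \<subseteq> R"
  shows "det (grounded_laplacian n R E) = 1"
proof -
  have "grounded_laplacian n R E = 1\<^sub>m n"
    using assms by (intro eq_matI) (auto simp: grounded_laplacian_def)
  then show ?thesis by simp
qed

text \<open>If no edge leaves \<open>R\<close>, the indicator vector of the complement of \<open>R\<close> lies in the kernel,
  because the rows of a Laplacian sum to zero.\<close>
lemma det_grounded_laplacian_closed:
  assumes sg: "simple_graph n E" and closed: "\<And>a b. {a, b} \<in> E \<Longrightarrow> a \<in> R \<Longrightarrow> b \<in> R"
    and w: "w < n" "w \<notin> R"
  shows "det (grounded_laplacian n R E) = 0"
proof -
  let ?A = "grounded_laplacian n R E" and ?v = "vec n (\<lambda>i. if i \<in> R then 0 else 1 :: real)"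
  have "?v $ w \<noteq> 0\<^sub>v n $ w" using w by simp
  then have "?v \<noteq> 0\<^sub>v n" by metis
  moreover have "(?A *\<^sub>v ?v) $ i = 0" if i: "i < n" for i
  proof (cases "i \<in> R")
    case True
    then show ?thesis using i by (auto simp: scalar_prod_def grounded_laplacian_def intro!: sum.neutral)
  next
    case False
    have "laplacian n E $$ (i, j) = 0" if "j < n" "j \<in> R" for j
      using that i False closed[of j i] by (auto simp: laplacian_def insert_commute)
    then have "(?A *\<^sub>v ?v) $ i = (\<Sum>j<n. laplacian n E $$ (i, j))"
      using i False by (auto simp: scalar_prod_def grounded_laplacian_def lessThan_atLeast0 intro!: sum.cong)
    then show ?thesis using laplacian_row_sum[OF sg i] by simp
  qed
  then have "?A *\<^sub>v ?v = 0\<^sub>v n" by (intro eq_vecI) (auto simp: grounded_laplacian_def)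
  ultimately show ?thesis
    by (subst det_0_iff_vec_prod_zero[OF grounded_laplacian_carrier]) (metis vec_carrier)
qed

inductive reaches :: "(nat \<Rightarrow> nat) \<Rightarrow> nat set \<Rightarrow> nat \<Rightarrow> bool" for p R where
  reaches_root: "x \<in> R \<Longrightarrow> reaches p R x"
| reaches_parent: "reaches p R (p x) \<Longrightarrow> reaches p R x"

text \<open>Spanning forests of \<open>E\<close> in which every tree contains exactly one root from \<open>R\<close>, encoded
  by their parent maps; the parent map is the identity on \<open>R\<close> and outside \<open>{0..<n}\<close>.\<close>
definition rooted_forests :: "nat \<Rightarrow> nat set \<Rightarrow> nat set set \<Rightarrow> (nat \<Rightarrow> nat) set" where
  "rooted_forests n R E = {p. (\<forall>x. x \<in> R \<or> n \<le> x \<longrightarrow> p x = x) \<and>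
     (\<forall>x<n. x \<notin> R \<longrightarrow> {x, p x} \<in> E \<and> reaches p R x)}"

lemma reaches_fun_upd_root: "reaches p R x \<Longrightarrow> reaches (p(u := u)) (insert u R) x"
proof (induction rule: reaches.induct)
  case (reaches_parent x)
  then show ?case by (cases "x = u") (auto intro: reaches.intros)
qed (simp add: reaches_root)

lemma reaches_fun_upd:
  assumes "reaches p (insert u R) x" and v: "reaches (p(u := v)) R v"
  shows "reaches (p(u := v)) R x"
proof -
  have u: "reaches (p(u := v)) R u" using reaches_parent[of "p(u := v)" R u] v by simp
  from assms(1) show ?thesis
  proof (induction rule: reaches.induct)
    case (reaches_root x)
    then show ?case using u by (metis insertE reaches.reaches_root)
  next
    case (reaches_parent x)
    then show ?case using u by (metis fun_upd_other reaches.reaches_parent)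
  qed
qed

lemma rooted_forests_finite:
  assumes "simple_graph n E"
  shows "finite (rooted_forests n R E)"
proof -
  let ?ext = "\<lambda>f x. if x < n then f x else x"
  have "rooted_forests n R E \<subseteq> ?ext ` (PiE {0..<n} (\<lambda>_. {0..<n}))"
  proof
    fix p assume p: "p \<in> rooted_forests n R E"
    have "p x < n" if "x < n" for x
      using p that simple_graph_edge[OF assms] unfolding rooted_forests_def by (cases "x \<in> R") auto
    moreover have "p = ?ext (restrict p {0..<n})"
      using p unfolding rooted_forests_def by force
    ultimately show "p \<in> ?ext ` (PiE {0..<n} (\<lambda>_. {0..<n}))" by (intro image_eqI) auto
  qed
  then show ?thesis by (rule finite_subset) (simp add: finite_PiE)
qed

lemma rooted_forests_mono: "E \<subseteq> E' \<Longrightarrow> rooted_forests n R E \<subseteq> rooted_forests n R E'"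
  unfolding rooted_forests_def by blast

lemma rooted_forests_avoiding_edge:
  assumes "u < n" "u \<notin> R" "v \<in> R"
  shows "{p \<in> rooted_forests n R E. p u \<noteq> v} = rooted_forests n R (E - {{u, v}})"
proof
  have "{x, p x} \<noteq> {u, v}" if "p u \<noteq> v" "x \<notin> R" for p x
    using that assms(3) by (auto simp: doubleton_eq_iff)
  then show "{p \<in> rooted_forests n R E. p u \<noteq> v} \<subseteq> rooted_forests n R (E - {{u, v}})"
    unfolding rooted_forests_def by blast
  show "rooted_forests n R (E - {{u, v}}) \<subseteq> {p \<in> rooted_forests n R E. p u \<noteq> v}"
    using assms(1,2) rooted_forests_mono[of "E - {{u, v}}" E n R]
    unfolding rooted_forests_def by blast
qed

lemma rooted_forests_through_edge:
  assumes sg: "simple_graph n E" and e: "{u, v} \<in> E" and u: "u \<notin> R" and v: "v \<in> R"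
  shows "bij_betw (\<lambda>p. p(u := u)) {p \<in> rooted_forests n R E. p u = v}
           (rooted_forests n (insert u R) (E - {{u, v}}))"
proof (rule bij_betw_byWitness[where f' = "\<lambda>p. p(u := v)"])
  have un: "u < n" using simple_graph_edge[OF sg e] by blast
  have ne: "{x, p x} \<noteq> {u, v}" if "x \<noteq> u" "x \<notin> R" for x p
    using that v by (auto simp: doubleton_eq_iff)
  show "\<forall>p\<in>{p \<in> rooted_forests n R E. p u = v}. (p(u := u))(u := v) = p" by auto
  show "\<forall>p\<in>rooted_forests n (insert u R) (E - {{u, v}}). (p(u := v))(u := u) = p"
    unfolding rooted_forests_def by auto
  show "(\<lambda>p. p(u := u)) ` {p \<in> rooted_forests n R E. p u = v}
      \<subseteq> rooted_forests n (insert u R) (E - {{u, v}})"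
    using ne reaches_fun_upd_root unfolding rooted_forests_def by auto
  show "(\<lambda>p. p(u := v)) ` rooted_forests n (insert u R) (E - {{u, v}})
      \<subseteq> {p \<in> rooted_forests n R E. p u = v}"
  proof safe
    fix p assume p: "p \<in> rooted_forests n (insert u R) (E - {{u, v}})"
    have reach: "reaches (p(u := v)) R x" if "x < n" for x
    proof (rule reaches_fun_upd)
      show "reaches p (insert u R) x"
        using p that unfolding rooted_forests_def by (cases "x \<in> insert u R") (auto intro: reaches_root)
      show "reaches (p(u := v)) R v" using v by (rule reaches_root)
    qed
    have "p x = x" if "x \<in> R \<or> n \<le> x" for x
      using p that unfolding rooted_forests_def by blast
    moreover have "{x, (p(u := v)) x} \<in> E" if "x < n" "x \<notin> R" for x
      using p that e unfolding rooted_forests_def by (cases "x = u") auto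
    ultimately show "p(u := v) \<in> rooted_forests n R E"
      using u un reach unfolding rooted_forests_def by auto
  qed simp
qed

lemma card_rooted_forests_Diff_edge:
  assumes sg: "simple_graph n E" and e: "{u, v} \<in> E" and u: "u \<notin> R" and v: "v \<in> R"
  shows "card (rooted_forests n R E)
       = card (rooted_forests n R (E - {{u, v}})) + card (rooted_forests n (insert u R) (E - {{u, v}}))"
proof -
  let ?F = "rooted_forests n R E"
  have "card ?F = card ({p \<in> ?F. p u \<noteq> v} \<union> {p \<in> ?F. p u = v})"
    by (rule arg_cong[where f = card]) blast
  also have "\<dots> = card {p \<in> ?F. p u \<noteq> v} + card {p \<in> ?F. p u = v}"
    using rooted_forests_finite[OF sg] by (intro card_Un_disjoint) auto
  finally show ?thesis
    using rooted_forests_avoiding_edge[OF _ u v] simple_graph_edge[OF sg e]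
      bij_betw_same_card[OF rooted_forests_through_edge[OF assms]] by simp
qed

lemma rooted_forests_all:
  assumes "{0..<n} \<subseteq> R"
  shows "rooted_forests n R E = {id}"
proof -
  have "x \<in> R" if "x < n" for x using assms that by auto
  then have "p x = x" if "p \<in> rooted_forests n R E" for p x
    using that unfolding rooted_forests_def by (cases "x < n") auto
  moreover have "id \<in> rooted_forests n R E"
    using \<open>\<And>x. x < n \<Longrightarrow> x \<in> R\<close> unfolding rooted_forests_def by auto
  ultimately show ?thesis by (auto simp: fun_eq_iff)
qed

lemma rooted_forests_closed:
  assumes sg: "simple_graph n E" and closed: "\<And>a b. {a, b} \<in> E \<Longrightarrow> a \<in> R \<Longrightarrow> b \<in> R"
    and w: "w < n" "w \<notin> R"
  shows "rooted_forests n R E = {}"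
proof -
  have "\<not> reaches p R x" if p: "p \<in> rooted_forests n R E" and "x < n" "x \<notin> R" for p x
  proof
    assume "reaches p R x"
    then show False using that(2,3)
    proof (induction rule: reaches.induct)
      case (reaches_parent x)
      then have "{x, p x} \<in> E" using p unfolding rooted_forests_def by blast
      then show ?case
        using reaches_parent simple_graph_edge[OF sg] closed[of "p x" x] by (auto simp: insert_commute)
    qed simp
  qed
  then show ?thesis using w unfolding rooted_forests_def by blast
qed

theorem det_grounded_laplacian:
  "simple_graph n E \<Longrightarrow> det (grounded_laplacian n R E) = real (card (rooted_forests n R E))"
proof (induction "card E" arbitrary: E R rule: less_induct)
  case less
  show ?case
  proof (cases "\<exists>u v. {u, v} \<in> E \<and> u \<notin> R \<and> v \<in> R")
    case True
    then obtain u v where e: "{u, v} \<in> E" and u: "u \<notin> R" and v: "v \<in> R" by blast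
    have "card (E - {{u, v}}) < card E"
      using simple_graph_finite[OF less.prems] e by (rule card_Diff1_less)
    then show ?thesis
      using less.hyps simple_graph_Diff[OF less.prems]
      by (simp add: det_grounded_laplacian_Diff_edge[OF less.prems e u v]
          card_rooted_forests_Diff_edge[OF less.prems e u v])
  next
    case False
    then have closed: "b \<in> R" if "{a, b} \<in> E" "a \<in> R" for a b
      using that by (metis insert_commute)
    show ?thesis
    proof (cases "{0..<n} \<subseteq> R")
      case True
      then show ?thesis by (simp add: det_grounded_laplacian_all rooted_forests_all)
    next
      case False
      then obtain w where "w < n" "w \<notin> R" by (auto simp: subset_iff)
      then show ?thesis
        using closed
        by (simp add: det_grounded_laplacian_closed[OF less.prems] rooted_forests_closed[OF less.prems])
    qed
  qed
qed

section \<open>Spanning trees through a forest\<close>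

definition edge_rel :: "nat set set \<Rightarrow> (nat \<times> nat) set" where
  "edge_rel T = {(a, b). {a, b} \<in> T}"

definition path_in :: "nat set set \<Rightarrow> nat list \<Rightarrow> bool" where
  "path_in T vs \<longleftrightarrow> (\<forall>i. Suc i < length vs \<longrightarrow> {vs ! i, vs ! Suc i} \<in> T)"

lemma has_cycle_iff_path_in:
  "has_cycle T \<longleftrightarrow>
     (\<exists>vs. 3 \<le> length vs \<and> distinct vs \<and> path_in T vs \<and> {last vs, hd vs} \<in> T)"
  unfolding has_cycle_def path_in_def by blast

lemma has_cycle_mono: "has_cycle T \<Longrightarrow> T \<subseteq> T' \<Longrightarrow> has_cycle T'"
  unfolding has_cycle_def by blast

lemma path_in_take: "path_in T vs \<Longrightarrow> path_in T (take k vs)"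
  unfolding path_in_def by simp

lemma path_in_Cons: "path_in T vs \<Longrightarrow> {y, vs ! 0} \<in> T \<Longrightarrow> path_in T (y # vs)"
  unfolding path_in_def by (auto simp: nth_Cons split: nat.split)

lemma sym_edge_rel: "sym (edge_rel T)"
  unfolding edge_rel_def sym_def by (auto simp: insert_commute)

lemma rtrancl_edge_rel_sym: "(x, y) \<in> (edge_rel T)\<^sup>* \<Longrightarrow> (y, x) \<in> (edge_rel T)\<^sup>*"
  using sym_rtrancl[OF sym_edge_rel] by (rule symD)

lemma rtrancl_edge_rel_mono: "T \<subseteq> T' \<Longrightarrow> (edge_rel T)\<^sup>* \<subseteq> (edge_rel T')\<^sup>*"
  by (rule rtrancl_mono) (auto simp: edge_rel_def)

lemma rtrancl_edge_rel_edge: "{a, b} \<in> T \<Longrightarrow> (a, b) \<in> (edge_rel T)\<^sup>*"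
  by (simp add: edge_rel_def r_into_rtrancl)

lemma rtrancl_edge_rel_doubleton:
  "{x, y} = {a, b} \<Longrightarrow> (x, y) \<in> (edge_rel T)\<^sup>* \<Longrightarrow> (a, b) \<in> (edge_rel T)\<^sup>*"
  by (metis doubleton_eq_iff rtrancl_edge_rel_sym)

lemma rtrancl_edge_rel_isolated:
  assumes "(v, a) \<in> (edge_rel T)\<^sup>*" and "\<And>e. e \<in> T \<Longrightarrow> v \<notin> e"
  shows "a = v"
  using assms(1) by (rule converse_rtranclE) (use assms(2) in \<open>auto simp: edge_rel_def\<close>)

lemma rtrancl_edge_rel_walk:
  assumes "\<And>k. i \<le> k \<Longrightarrow> k < j \<Longrightarrow> {vs ! k, vs ! Suc k} \<in> T" and "i \<le> j"
  shows "(vs ! i, vs ! j) \<in> (edge_rel T)\<^sup>*"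
  using assms
proof (induction j)
  case (Suc j)
  then show ?case
    by (cases "i = Suc j") (auto simp: edge_rel_def intro: rtrancl_into_rtrancl)
qed simp

text \<open>The first vertex of a longest path is a leaf: another edge at it would either extend the
  path or close a cycle.\<close>
lemma forest_has_leaf:
  assumes sg: "simple_graph n T" and ne: "T \<noteq> {}" and nc: "\<not> has_cycle T"
  obtains v w where "{v, w} \<in> T" and "\<And>e. e \<in> T \<Longrightarrow> v \<in> e \<Longrightarrow> e = {v, w}"
proof -
  define P where "P vs \<longleftrightarrow> distinct vs \<and> set vs \<subseteq> {..<n} \<and> 2 \<le> length vs \<and> path_in T vs" for vs
  have "length vs < Suc n" if "P vs" for vs
  proof -
    have "card (set vs) \<le> n" using that card_mono[of "{..<n}" "set vs"] unfolding P_def by simp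
    then show ?thesis using that distinct_card[of vs] unfolding P_def by simp
  qed
  moreover obtain e where "e \<in> T" using ne by blast
  then obtain a b where "{a, b} \<in> T" using sg unfolding simple_graph_def by metis
  then have "P [a, b]"
    using simple_graph_edge[OF sg] unfolding P_def path_in_def by (auto simp: less_Suc_eq)
  ultimately obtain vs where vs: "P vs" and longest: "\<And>ws. P ws \<Longrightarrow> length ws \<le> length vs"
    using Lattices_Big.ex_has_greatest_nat[of P "[a, b]" length "Suc n"] by blast
  then have len: "2 \<le> length vs" and dist: "distinct vs" and path: "path_in T vs"
    unfolding P_def by auto
  have "Suc 0 < length vs" using len by simp
  with path have vw: "{vs ! 0, vs ! Suc 0} \<in> T" unfolding path_in_def by blast
  have "e = {vs ! 0, vs ! Suc 0}" if e: "e \<in> T" "vs ! 0 \<in> e" for e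
  proof (rule ccontr)
    assume ne: "e \<noteq> {vs ! 0, vs ! Suc 0}"
    obtain y where y: "e = {vs ! 0, y}" "y < n" "y \<noteq> vs ! 0"
      using simple_graph_edge_at[OF sg e] by blast
    show False
    proof (cases "y \<in> set vs")
      case False
      have "P (y # vs)"
        using vs y e False path_in_Cons[OF path] unfolding P_def by (auto simp: insert_commute)
      then show False using longest by fastforce
    next
      case True
      then obtain i where i: "i < length vs" "vs ! i = y" by (auto simp: in_set_conv_nth)
      let ?cs = "take (Suc i) vs"
      have "i \<noteq> 0" "i \<noteq> 1" using i y ne by auto
      then have "3 \<le> length ?cs" using i by simp
      moreover have "last ?cs = y" using i by (simp add: take_Suc_conv_app_nth)
      moreover have "hd ?cs = vs ! 0" using len by (cases vs) auto
      ultimately have "has_cycle T"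
        unfolding has_cycle_iff_path_in using dist path_in_take[OF path] e y
        by (metis distinct_take insert_commute)
      then show False using nc by blast
    qed
  qed
  with vw that show ?thesis by blast
qed

lemma rtrancl_edge_rel_remove_leaf:
  assumes leaf: "\<And>e. e \<in> T \<Longrightarrow> v \<in> e \<Longrightarrow> e = {v, w}"
    and "(x, z) \<in> (edge_rel T)\<^sup>*" and "x \<noteq> v"
  shows "(x, if z = v then w else z) \<in> (edge_rel (T - {{v, w}}))\<^sup>*"
  using assms(2)
proof (induction rule: rtrancl_induct)
  case (step z z')
  then have zz': "{z, z'} \<in> T" by (simp add: edge_rel_def)
  show ?case
  proof (cases "z' = v")
    case True
    then have "z = w" using leaf[OF zz'] by (auto simp: doubleton_eq_iff)
    then show ?thesis using step.IH True by (auto split: if_splits)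
  next
    case z': False
    show ?thesis
    proof (cases "z = v")
      case True
      then have "z' = w" using leaf[OF zz'] by (auto simp: doubleton_eq_iff)
      then show ?thesis using step.IH True z' by simp
    next
      case False
      then have "(z, z') \<in> edge_rel (T - {{v, w}})"
        using zz' z' by (auto simp: edge_rel_def doubleton_eq_iff)
      then show ?thesis using step.IH False z' by (simp add: rtrancl_into_rtrancl)
    qed
  qed
qed (use assms(3) in simp)

definition one_root_per_component :: "nat set set \<Rightarrow> nat set \<Rightarrow> bool" where
  "one_root_per_component T R \<longleftrightarrow>
     (\<forall>x. \<exists>\<rho>\<in>R. (x, \<rho>) \<in> (edge_rel T)\<^sup>*) \<and>
     (\<forall>\<rho>\<in>R. \<forall>\<rho>'\<in>R. (\<rho>, \<rho>') \<in> (edge_rel T)\<^sup>* \<longrightarrow> \<rho> = \<rho>')"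

lemma one_root_per_component_remove_leaf_root:
  assumes roots: "one_root_per_component T R"
    and leaf: "\<And>e. e \<in> T \<Longrightarrow> v \<in> e \<Longrightarrow> e = {v, w}" and vw: "{v, w} \<in> T" "v \<noteq> w"
    and v: "v \<in> R"
  shows "w \<notin> R" and "one_root_per_component (T - {{v, w}}) (insert w R)"
proof -
  let ?T' = "T - {{v, w}}"
  have cover: "\<And>x. \<exists>\<rho>\<in>R. (x, \<rho>) \<in> (edge_rel T)\<^sup>*"
    and unique: "\<And>\<rho> \<rho>'. \<rho> \<in> R \<Longrightarrow> \<rho>' \<in> R \<Longrightarrow> (\<rho>, \<rho>') \<in> (edge_rel T)\<^sup>* \<Longrightarrow> \<rho> = \<rho>'"
    using roots unfolding one_root_per_component_def by blast+
  have sub: "(edge_rel ?T')\<^sup>* \<subseteq> (edge_rel T)\<^sup>*" by (rule rtrancl_edge_rel_mono) blast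
  have vw_conn: "(v, w) \<in> (edge_rel T)\<^sup>*" using vw(1) by (rule rtrancl_edge_rel_edge)
  then show "w \<notin> R" using unique[OF v] vw(2) by blast
  have w_alone: False if "\<rho> \<in> R" "(w, \<rho>) \<in> (edge_rel ?T')\<^sup>*" for \<rho>
  proof -
    have "\<rho> = v" using unique[OF v that(1)] vw_conn sub that(2) by (metis rtrancl_trans subsetD)
    then have "(v, w) \<in> (edge_rel ?T')\<^sup>*" using that(2) by (simp add: rtrancl_edge_rel_sym)
    then show False using rtrancl_edge_rel_isolated leaf vw(2) by blast
  qed
  show "one_root_per_component ?T' (insert w R)"
    unfolding one_root_per_component_def
  proof safe
    fix x
    obtain \<rho> where "\<rho> \<in> R" "(x, \<rho>) \<in> (edge_rel T)\<^sup>*" using cover by blast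
    then show "\<exists>\<rho>\<in>insert w R. (x, \<rho>) \<in> (edge_rel ?T')\<^sup>*"
      using rtrancl_edge_rel_remove_leaf[of T v w x \<rho>, OF leaf] v
      by (cases "x = v") (auto split: if_splits)
  next
    fix \<rho> \<rho>' assume "\<rho> \<in> R" "\<rho>' \<in> R" "(\<rho>, \<rho>') \<in> (edge_rel ?T')\<^sup>*"
    then show "\<rho> = \<rho>'" using unique sub by blast
  qed (use w_alone rtrancl_edge_rel_sym in blast)+
qed

lemma one_root_per_component_remove_leaf_nonroot:
  assumes roots: "one_root_per_component T R"
    and leaf: "\<And>e. e \<in> T \<Longrightarrow> v \<in> e \<Longrightarrow> e = {v, w}" and v: "v \<notin> R"
  shows "one_root_per_component (T - {{v, w}}) (insert v R)"
proof -
  let ?T' = "T - {{v, w}}"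
  have cover: "\<And>x. \<exists>\<rho>\<in>R. (x, \<rho>) \<in> (edge_rel T)\<^sup>*"
    and unique: "\<And>\<rho> \<rho>'. \<rho> \<in> R \<Longrightarrow> \<rho>' \<in> R \<Longrightarrow> (\<rho>, \<rho>') \<in> (edge_rel T)\<^sup>* \<Longrightarrow> \<rho> = \<rho>'"
    using roots unfolding one_root_per_component_def by blast+
  have sub: "(edge_rel ?T')\<^sup>* \<subseteq> (edge_rel T)\<^sup>*" by (rule rtrancl_edge_rel_mono) blast
  have isolated: "a = v" if "(v, a) \<in> (edge_rel ?T')\<^sup>*" for a
    using rtrancl_edge_rel_isolated[OF that] leaf by blast
  show ?thesis
    unfolding one_root_per_component_def
  proof safe
    fix x
    obtain \<rho> where "\<rho> \<in> R" "(x, \<rho>) \<in> (edge_rel T)\<^sup>*" using cover by blast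
    then show "\<exists>\<rho>\<in>insert v R. (x, \<rho>) \<in> (edge_rel ?T')\<^sup>*"
      using rtrancl_edge_rel_remove_leaf[of T v w x \<rho>, OF leaf] v
      by (cases "x = v") (auto split: if_splits)
  next
    fix \<rho> \<rho>' assume "\<rho> \<in> R" "\<rho>' \<in> R" "(\<rho>, \<rho>') \<in> (edge_rel ?T')\<^sup>*"
    then show "\<rho> = \<rho>'" using unique sub by blast
  qed (use isolated rtrancl_edge_rel_sym in blast)+
qed

definition is_parent_map :: "nat set set \<Rightarrow> nat set \<Rightarrow> (nat \<Rightarrow> nat) \<Rightarrow> bool" where
  "is_parent_map T R q \<longleftrightarrow> (\<forall>x. q x = x \<longleftrightarrow> x \<in> R) \<and> (\<forall>x. x \<notin> R \<longrightarrow> {x, q x} \<in> T) \<and>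
     (\<forall>a b. {a, b} \<in> T \<longrightarrow> q a = b \<or> q b = a) \<and> (\<forall>x. reaches q R x)"

lemma reaches_fun_upd_avoiding:
  assumes "reaches p (insert s R) x" and "x \<noteq> s" and "\<And>y. y \<notin> insert s R \<Longrightarrow> p y \<noteq> s"
  shows "reaches (p(s := t)) R x"
  using assms(1,2)
proof (induction rule: reaches.induct)
  case (reaches_parent x)
  show ?case
  proof (cases "x \<in> R")
    case False
    then have "p x \<noteq> s" using assms(3) reaches_parent.prems by blast
    then have "reaches (p(s := t)) R (p x)" by (rule reaches_parent.IH)
    then show ?thesis using reaches_parent.prems by (metis fun_upd_other reaches.reaches_parent)
  qed (rule reaches_root)
qed (auto intro: reaches_root)

lemma is_parent_map_fun_upd:
  assumes q: "is_parent_map (T - {{s, t}}) (insert s R) q"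
    and sg: "simple_graph n T" and st: "{s, t} \<in> T" and s: "s \<notin> R"
    and t: "reaches (q(s := t)) R t"
  shows "is_parent_map T R (q(s := t))"
  unfolding is_parent_map_def
proof (intro conjI allI impI)
  have "s \<noteq> t" using simple_graph_edge[OF sg st] by blast
  have fixed: "q x = x \<longleftrightarrow> x \<in> insert s R" for x
    using q unfolding is_parent_map_def by blast
  show "(q(s := t)) x = x \<longleftrightarrow> x \<in> R" for x
    using fixed[of x] s \<open>s \<noteq> t\<close> by (cases "x = s") auto
  show "{x, (q(s := t)) x} \<in> T" if "x \<notin> R" for x
    using q that st unfolding is_parent_map_def by (cases "x = s") auto
  show "(q(s := t)) a = b \<or> (q(s := t)) b = a" if ab: "{a, b} \<in> T" for a b
  proof (cases "{a, b} = {s, t}")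
    case True
    then show ?thesis by (auto simp: doubleton_eq_iff)
  next
    case False
    then have "q a = b \<or> q b = a" using q ab unfolding is_parent_map_def by blast
    moreover have "a \<noteq> b" using simple_graph_edge[OF sg ab] by blast
    ultimately show ?thesis using fixed[of a] fixed[of b] by auto
  qed
  show "reaches (q(s := t)) R x" for x
    using q unfolding is_parent_map_def by (blast intro: reaches_fun_upd[OF _ t])
qed

lemma is_parent_map_fun_upd_leaf:
  assumes q: "is_parent_map (T - {{v, w}}) (insert v R) q"
    and sg: "simple_graph n T" and vw: "{v, w} \<in> T" and v: "v \<notin> R"
    and leaf: "\<And>e. e \<in> T \<Longrightarrow> v \<in> e \<Longrightarrow> e = {v, w}"
  shows "is_parent_map T R (q(v := w))"
proof (rule is_parent_map_fun_upd[OF q sg vw v])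
  show "reaches (q(v := w)) R w"
  proof (rule reaches_fun_upd_avoiding)
    show "reaches q (insert v R) w" using q unfolding is_parent_map_def by blast
    show "w \<noteq> v" using simple_graph_edge[OF sg vw] by blast
    show "q y \<noteq> v" if "y \<notin> insert v R" for y
      using q that leaf unfolding is_parent_map_def by blast
  qed
qed

lemma forest_has_parent_map:
  assumes "simple_graph n T" and "\<not> has_cycle T" and "one_root_per_component T R"
  shows "\<exists>q. is_parent_map T R q"
  using assms
proof (induction "card T" arbitrary: T R rule: less_induct)
  case less
  show ?case
  proof (cases "T = {}")
    case True
    then have "x \<in> R" for x
      using less.prems(3) unfolding one_root_per_component_def edge_rel_def by auto
    then have "is_parent_map T R id" using True unfolding is_parent_map_def by (auto intro: reaches_root)
    then show ?thesis by blast
  next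
    case False
    obtain v w where vw: "{v, w} \<in> T" and leaf: "\<And>e. e \<in> T \<Longrightarrow> v \<in> e \<Longrightarrow> e = {v, w}"
      using forest_has_leaf[OF less.prems(1) False less.prems(2)] by blast
    let ?T' = "T - {{v, w}}"
    have "v \<noteq> w" using simple_graph_edge[OF less.prems(1) vw] by blast
    have smaller: "card ?T' < card T"
      using simple_graph_finite[OF less.prems(1)] vw by (rule card_Diff1_less)
    have sg': "simple_graph n ?T'" using less.prems(1) by (rule simple_graph_Diff)
    have nc': "\<not> has_cycle ?T'" using less.prems(2) has_cycle_mono by blast
    show ?thesis
    proof (cases "v \<in> R")
      case True
      note roots = one_root_per_component_remove_leaf_root[OF less.prems(3) leaf vw \<open>v \<noteq> w\<close> True]
      obtain q where "is_parent_map ?T' (insert w R) q"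
        using less.hyps[OF smaller sg' nc' roots(2)] by blast
      then have "is_parent_map T R (q(w := v))"
        using less.prems(1) vw roots(1) True
        by (intro is_parent_map_fun_upd) (auto simp: insert_commute intro: reaches_root)
      then show ?thesis by blast
    next
      case False
      note roots = one_root_per_component_remove_leaf_nonroot[OF less.prems(3) leaf False]
      obtain q where "is_parent_map ?T' (insert v R) q"
        using less.hyps[OF smaller sg' nc' roots] by blast
      then show ?thesis using is_parent_map_fun_upd_leaf less.prems(1) vw False leaf by blast
    qed
  qed
qed

lemma distinct_adjacent_doubleton_eq:
  assumes "distinct vs" "Suc i < length vs" "Suc j < length vs"
    and "{vs ! i, vs ! Suc i} = {vs ! j, vs ! Suc j}"
  shows "i = j"
  using assms by (auto simp: doubleton_eq_iff nth_eq_iff_index_eq)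

lemma distinct_adjacent_doubleton_neq_closing:
  assumes "distinct vs" "3 \<le> length vs" "Suc j < length vs"
  shows "{vs ! j, vs ! Suc j} \<noteq> {last vs, hd vs}"
proof -
  have "vs \<noteq> []" using assms(2) by auto
  then have "last vs = vs ! (length vs - 1)" "hd vs = vs ! 0"
    by (simp_all add: last_conv_nth hd_conv_nth)
  moreover have "j = 0" if "vs ! j = vs ! 0"
    using nth_eq_iff_index_eq[OF assms(1), of j 0] assms(3) that \<open>vs \<noteq> []\<close> by simp
  ultimately show ?thesis using assms by (auto simp: doubleton_eq_iff nth_eq_iff_index_eq)
qed

lemma connected_if_has_cycle_insert:
  assumes nc: "\<not> has_cycle T" and hc: "has_cycle (insert {a, b} T)"
  shows "(a, b) \<in> (edge_rel T)\<^sup>*"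
proof -
  obtain vs where len: "3 \<le> length vs" and dist: "distinct vs"
    and path: "path_in (insert {a, b} T) vs" and closing: "{last vs, hd vs} \<in> insert {a, b} T"
    using hc unfolding has_cycle_iff_path_in by blast
  let ?c = "length vs"
  have "vs \<noteq> []" using len by auto
  then have ends: "last vs = vs ! (?c - 1)" "hd vs = vs ! 0"
    by (simp_all add: last_conv_nth hd_conv_nth)
  show ?thesis
  proof (cases "{last vs, hd vs} \<in> T")
    case False
    then have ab: "{vs ! 0, vs ! (?c - 1)} = {a, b}" using closing ends by (auto simp: insert_commute)
    have "{vs ! k, vs ! Suc k} \<in> T" if "Suc k < ?c" for k
      using path that distinct_adjacent_doubleton_neq_closing[OF dist len that] closing False
      unfolding path_in_def by blast
    then have "(vs ! 0, vs ! (?c - 1)) \<in> (edge_rel T)\<^sup>*" by (intro rtrancl_edge_rel_walk) auto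
    then show ?thesis using ab by (rule rtrancl_edge_rel_doubleton[rotated])
  next
    case True
    then have "\<not> path_in T vs" using nc len dist unfolding has_cycle_iff_path_in by blast
    then obtain j where j: "Suc j < ?c" "{vs ! j, vs ! Suc j} \<notin> T" unfolding path_in_def by blast
    then have ab: "{vs ! Suc j, vs ! j} = {a, b}" using path unfolding path_in_def by (auto simp: insert_commute)
    have other: "{vs ! k, vs ! Suc k} \<in> T" if "Suc k < ?c" "k \<noteq> j" for k
      using path that j distinct_adjacent_doubleton_eq[OF dist that(1) j(1)] unfolding path_in_def by blast
    have "(vs ! Suc j, vs ! (?c - 1)) \<in> (edge_rel T)\<^sup>*"
      by (rule rtrancl_edge_rel_walk) (use other j in auto)
    moreover have "(vs ! (?c - 1), vs ! 0) \<in> (edge_rel T)\<^sup>*"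
      using True ends by (simp add: rtrancl_edge_rel_edge)
    moreover have "(vs ! 0, vs ! j) \<in> (edge_rel T)\<^sup>*"
      by (rule rtrancl_edge_rel_walk) (use other j in auto)
    ultimately have "(vs ! Suc j, vs ! j) \<in> (edge_rel T)\<^sup>*" by (meson rtrancl_trans)
    then show ?thesis using ab by (rule rtrancl_edge_rel_doubleton[rotated])
  qed
qed

lemma maximal_forest_exists:
  assumes "finite E" "U \<subseteq> E" "\<not> has_cycle U"
  obtains T where "U \<subseteq> T" "T \<subseteq> E" "\<not> has_cycle T"
    "\<And>e. e \<in> E \<Longrightarrow> e \<notin> T \<Longrightarrow> has_cycle (insert e T)"
proof -
  define P where "P T \<longleftrightarrow> U \<subseteq> T \<and> T \<subseteq> E \<and> \<not> has_cycle T" for T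
  have "card T < Suc (card E)" if "P T" for T
    using that card_mono[OF assms(1)] unfolding P_def by (simp add: less_Suc_eq_le)
  moreover have "P U" using assms unfolding P_def by blast
  ultimately obtain T where T: "P T" and max: "\<And>T'. P T' \<Longrightarrow> card T' \<le> card T"
    using Lattices_Big.ex_has_greatest_nat[of P U card "Suc (card E)"] by blast
  have "has_cycle (insert e T)" if "e \<in> E" "e \<notin> T" for e
  proof (rule ccontr)
    assume "\<not> has_cycle (insert e T)"
    then have "P (insert e T)" using T that unfolding P_def by blast
    moreover have "finite T" using T assms(1) finite_subset unfolding P_def by blast
    ultimately show False using max[of "insert e T"] that by simp
  qed
  with T that show ?thesis unfolding P_def by blast
qed

lemma rtrancl_edge_rel_maximal_forest:
  assumes "\<not> has_cycle T" and "\<And>e. e \<in> E \<Longrightarrow> e \<notin> T \<Longrightarrow> has_cycle (insert e T)"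
  shows "(edge_rel E)\<^sup>* \<subseteq> (edge_rel T)\<^sup>*"
proof -
  have "edge_rel E \<subseteq> (edge_rel T)\<^sup>*"
    using assms connected_if_has_cycle_insert rtrancl_edge_rel_edge unfolding edge_rel_def by blast
  then show ?thesis by (rule rtrancl_subset_rtrancl)
qed

text \<open>The vertices outside \<open>{0..<n}\<close> are isolated, so they serve as roots of their own.\<close>
lemma one_root_per_component_spanning:
  assumes sg: "simple_graph n T" and r: "r < n" and conn: "\<And>x. x < n \<Longrightarrow> (x, r) \<in> (edge_rel T)\<^sup>*"
  shows "one_root_per_component T (insert r {x. n \<le> x})"
  unfolding one_root_per_component_def
proof (intro conjI allI ballI impI)
  have outside: "a = \<rho>" if "(\<rho>, a) \<in> (edge_rel T)\<^sup>*" "n \<le> \<rho>" for \<rho> a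
    using rtrancl_edge_rel_isolated[OF that(1)] that(2) sg unfolding simple_graph_def by force
  show "\<rho> = \<rho>'" if "\<rho> \<in> insert r {x. n \<le> x}" "\<rho>' \<in> insert r {x. n \<le> x}"
    "(\<rho>, \<rho>') \<in> (edge_rel T)\<^sup>*" for \<rho> \<rho>'
    using that outside rtrancl_edge_rel_sym by (metis insert_iff mem_Collect_eq)
  show "\<exists>\<rho>\<in>insert r {x. n \<le> x}. (x, \<rho>) \<in> (edge_rel T)\<^sup>*" for x
  proof (cases "x < n")
    case False
    then show ?thesis by (intro bexI[of _ x]) auto
  qed (use conn in blast)
qed

lemma is_parent_map_rooted_forest:
  assumes sg: "simple_graph n T" and TE: "T \<subseteq> E" and q: "is_parent_map T (insert r {x. n \<le> x}) q"
  shows "q \<in> rooted_forests n {r} E"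
proof -
  let ?R = "insert r {x. n \<le> x}"
  have "reaches q {r} x" if "reaches q ?R x" "x < n" for x
    using that
  proof (induction rule: reaches.induct)
    case (reaches_parent x)
    show ?case
    proof (cases "x \<in> ?R")
      case False
      then have "q x < n" using q simple_graph_edge[OF sg] unfolding is_parent_map_def by blast
      then show ?thesis by (rule reaches.reaches_parent[OF reaches_parent.IH])
    qed (use reaches_parent.prems in \<open>auto intro: reaches_root\<close>)
  qed (auto intro: reaches_root)
  then show ?thesis using q TE unfolding is_parent_map_def rooted_forests_def by auto
qed

lemma forest_extends_to_spanning_tree:
  assumes sg: "simple_graph n E" and cg: "connected_graph n E"
    and U: "U \<subseteq> E" "\<not> has_cycle U" and r: "r < n"
  obtains p where "p \<in> rooted_forests n {r} E" and "\<And>a b. {a, b} \<in> U \<Longrightarrow> p a = b \<or> p b = a"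
proof -
  obtain T where UT: "U \<subseteq> T" and TE: "T \<subseteq> E" and nc: "\<not> has_cycle T"
    and max: "\<And>e. e \<in> E \<Longrightarrow> e \<notin> T \<Longrightarrow> has_cycle (insert e T)"
    using maximal_forest_exists[OF simple_graph_finite[OF sg] U] by blast
  have sgT: "simple_graph n T" using sg TE unfolding simple_graph_def by blast
  have "(x, r) \<in> (edge_rel T)\<^sup>*" if "x < n" for x
    using cg that r rtrancl_edge_rel_maximal_forest[OF nc max]
    unfolding connected_graph_def edge_rel_def by blast
  then obtain q where q: "is_parent_map T (insert r {x. n \<le> x}) q"
    using forest_has_parent_map[OF sgT nc one_root_per_component_spanning[OF sgT r]] by blast
  then have "q a = b \<or> q b = a" if "{a, b} \<in> U" for a b
    using that UT unfolding is_parent_map_def by blast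
  then show ?thesis using that is_parent_map_rooted_forest[OF sgT TE q] by blast
qed

section \<open>Flows along a spanning tree\<close>

definition net_flow :: "(nat \<times> nat) set \<Rightarrow> (nat \<Rightarrow> nat \<Rightarrow> real) \<Rightarrow> nat \<Rightarrow> nat \<Rightarrow> real" where
  "net_flow S x a b = (if (a, b) \<in> S then x a b else 0) - (if (b, a) \<in> S then x b a else 0)"

lemma net_flow_swap: "net_flow S x b a = - net_flow S x a b"
  by (simp add: net_flow_def)

lemma divergence_eq_sum_net_flow:
  assumes "finite N" and "{j. (y, j) \<in> S} \<subseteq> N" and "{j. (j, y) \<in> S} \<subseteq> N"
  shows "(\<Sum>j\<in>{j. (y, j) \<in> S}. x y j) - (\<Sum>i\<in>{i. (i, y) \<in> S}. x i y) = (\<Sum>j\<in>N. net_flow S x y j)"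
proof -
  have "{j \<in> N. (y, j) \<in> S} = {j. (y, j) \<in> S}" "{j \<in> N. (j, y) \<in> S} = {j. (j, y) \<in> S}"
    using assms(2,3) by blast+
  then show ?thesis
    using sum.inter_filter[OF assms(1), of "x y" "\<lambda>j. (y, j) \<in> S"]
      sum.inter_filter[OF assms(1), of "\<lambda>j. x j y" "\<lambda>j. (j, y) \<in> S"]
    by (simp add: net_flow_def sum_subtractf)
qed

lemma arc_iff_net_flow_pos:
  assumes "\<And>a b. (a, b) \<in> S \<Longrightarrow> (b, a) \<notin> S" and "\<And>a b. (a, b) \<in> S \<Longrightarrow> 0 < x a b"
  shows "(a, b) \<in> S \<longleftrightarrow> 0 < net_flow S x a b"
  using assms[of a b] assms[of b a] by (auto simp: net_flow_def)

definition children :: "nat \<Rightarrow> nat \<Rightarrow> (nat \<Rightarrow> nat) \<Rightarrow> nat \<Rightarrow> nat set" where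
  "children n r p y = {z. z < n \<and> z \<noteq> r \<and> p z = y}"

definition along_tree :: "(nat \<Rightarrow> nat) \<Rightarrow> (nat \<times> nat) set \<Rightarrow> bool" where
  "along_tree p S \<longleftrightarrow> (\<forall>(a, b)\<in>S. p a = b \<or> p b = a)"

lemma reaches_no_2cycle: "reaches p R x \<Longrightarrow> x \<notin> R \<Longrightarrow> p x \<notin> R \<Longrightarrow> p (p x) \<noteq> x"
  by (induction rule: reaches.induct) auto

lemma reaches_funpow: "reaches p R x \<Longrightarrow> \<exists>k. (p ^^ k) x \<in> R"
proof (induction rule: reaches.induct)
  case (reaches_root x)
  then show ?case by (metis funpow_0)
next
  case (reaches_parent x)
  then show ?case by (metis funpow_Suc_right comp_apply)
qed

lemma rooted_tree_reaches_root:
  "p \<in> rooted_forests n {r} E \<Longrightarrow> x < n \<Longrightarrow> reaches p {r} x"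
  unfolding rooted_forests_def by (cases "x = r") (auto intro: reaches_root)

lemma rooted_tree_parent_notin_children:
  assumes "p \<in> rooted_forests n {r} E" and "y < n"
  shows "p y \<notin> children n r p y"
proof
  assume "p y \<in> children n r p y"
  then have "p y \<noteq> r" "p (p y) = y" by (auto simp: children_def)
  moreover have "y \<noteq> r" using calculation assms(1) unfolding rooted_forests_def by auto
  ultimately show False
    using reaches_no_2cycle[OF rooted_tree_reaches_root[OF assms]] by blast
qed

lemma rooted_tree_depth:
  assumes "p \<in> rooted_forests n {r} E"
  obtains depth :: "nat \<Rightarrow> nat" where "\<And>c. c < n \<Longrightarrow> c \<noteq> r \<Longrightarrow> depth (p c) < depth c"
proof -
  define depth where "depth z = (LEAST k. (p ^^ k) z = r)" for z
  have "depth (p c) < depth c" if c: "c < n" "c \<noteq> r" for c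
  proof -
    have "\<exists>k. (p ^^ k) c = r" using reaches_funpow[OF rooted_tree_reaches_root[OF assms c(1)]] by blast
    then have "(p ^^ depth c) c = r" unfolding depth_def by (rule LeastI_ex)
    moreover obtain k where k: "depth c = Suc k" using calculation c(2) by (cases "depth c") auto
    ultimately have "(p ^^ k) (p c) = r" by (simp add: funpow_Suc_right del: funpow.simps)
    then have "depth (p c) \<le> k" unfolding depth_def by (rule Least_le)
    then show ?thesis using k by simp
  qed
  then show ?thesis using that by blast
qed

lemma children_recursion_unique:
  fixes \<phi> \<psi> :: "nat \<Rightarrow> real"
  assumes p: "p \<in> rooted_forests n {r} E"
    and \<phi>: "\<And>y. y < n \<Longrightarrow> \<phi> y = b y + (\<Sum>c\<in>children n r p y. \<phi> c)"
    and \<psi>: "\<And>y. y < n \<Longrightarrow> \<psi> y = b y + (\<Sum>c\<in>children n r p y. \<psi> c)"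
    and y: "y < n"
  shows "\<phi> y = \<psi> y"
proof -
  obtain depth :: "nat \<Rightarrow> nat" where depth: "\<And>c. c < n \<Longrightarrow> c \<noteq> r \<Longrightarrow> depth (p c) < depth c"
    using rooted_tree_depth[OF p] by blast
  define M where "M = Max (depth ` {..<n})"
  have "depth c \<le> M" if "c < n" for c unfolding M_def using that by (intro Max_ge) auto
  then show ?thesis using y
  proof (induction "M - depth y" arbitrary: y rule: less_induct)
    case less
    have "\<phi> c = \<psi> c" if "c \<in> children n r p y" for c
    proof -
      have "c < n" "c \<noteq> r" "p c = y" using that by (auto simp: children_def)
      then have "depth y < depth c" "depth c \<le> M" using depth less.prems(1) by auto
      then have "M - depth c < M - depth y" by linarith
      then show ?thesis using less.hyps less.prems(1) \<open>c < n\<close> by blast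
    qed
    then show ?case using \<phi>[OF less.prems(2)] \<psi>[OF less.prems(2)] by simp
  qed
qed

lemma finite_children [simp]: "finite (children n r p y)"
  by (simp add: children_def)

lemma feasible_configE:
  assumes "feasible_config n E g d cap S"
  obtains x where "\<And>a b. (a, b) \<in> S \<Longrightarrow> {a, b} \<in> E" and "acyclic S"
    and "\<not> has_cycle (underlying S)" and "\<And>a b. (a, b) \<in> S \<Longrightarrow> 0 < x a b"
    and "\<And>k. k < n \<Longrightarrow> (\<Sum>j\<in>{j. (k, j) \<in> S}. x k j) - (\<Sum>i\<in>{i. (i, k) \<in> S}. x i k) = g k - d k"
  using assms unfolding feasible_config_def polyforest_def by fast

lemma acyclic_antisym: "acyclic S \<Longrightarrow> (a, b) \<in> S \<Longrightarrow> (b, a) \<notin> S"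
  unfolding acyclic_def by (meson trancl.intros)

lemma divergence_eq_tree_flows:
  assumes sg: "simple_graph n E" and p: "p \<in> rooted_forests n {r} E"
    and SE: "\<And>a b. (a, b) \<in> S \<Longrightarrow> {a, b} \<in> E" and along: "along_tree p S" and y: "y < n"
  shows "(\<Sum>j\<in>{j. (y, j) \<in> S}. x y j) - (\<Sum>i\<in>{i. (i, y) \<in> S}. x i y)
       = net_flow S x y (p y) - (\<Sum>z\<in>children n r p y. net_flow S x z (p z))"
proof -
  let ?N = "insert (p y) (children n r p y)"
  have "p r = r" using p unfolding rooted_forests_def by blast
  have neighbour: "j \<in> ?N" if "(y, j) \<in> S \<or> (j, y) \<in> S" for j
  proof -
    have "{y, j} \<in> E" using that SE by (metis insert_commute)
    then have "j < n" "j \<noteq> y" using simple_graph_edge[OF sg] by blast+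
    moreover have "p y = j \<or> p j = y" using that along unfolding along_tree_def by auto
    ultimately show ?thesis using \<open>p r = r\<close> unfolding children_def by auto
  qed
  have "(\<Sum>j\<in>{j. (y, j) \<in> S}. x y j) - (\<Sum>i\<in>{i. (i, y) \<in> S}. x i y) = (\<Sum>j\<in>?N. net_flow S x y j)"
    using neighbour by (intro divergence_eq_sum_net_flow) auto
  also have "\<dots> = net_flow S x y (p y) + (\<Sum>z\<in>children n r p y. net_flow S x y z)"
    using rooted_tree_parent_notin_children[OF p y] by (rule sum.insert[OF finite_children])
  also have "(\<Sum>z\<in>children n r p y. net_flow S x y z) = - (\<Sum>z\<in>children n r p y. net_flow S x z (p z))"
  proof -
    have "net_flow S x y z = - net_flow S x z (p z)" if "z \<in> children n r p y" for z
      using that net_flow_swap[of S x z y] by (simp add: children_def)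
    then show ?thesis unfolding sum_negf[symmetric] by (rule sum.cong[OF refl])
  qed
  finally show ?thesis by simp
qed

lemma arcs_determined_by_tree_flows:
  assumes sg: "simple_graph n E" and SE: "\<And>a b. (a, b) \<in> S \<Longrightarrow> {a, b} \<in> E" and "acyclic S"
    and pos: "\<And>a b. (a, b) \<in> S \<Longrightarrow> 0 < x a b" and along: "along_tree p S"
  shows "(a, b) \<in> S \<longleftrightarrow> a < n \<and> b < n \<and>
           (p a = b \<and> 0 < net_flow S x a (p a) \<or> p b = a \<and> net_flow S x b (p b) < 0)"
proof -
  have "(a, b) \<in> S \<longleftrightarrow> 0 < net_flow S x a b"
    using acyclic_antisym[OF \<open>acyclic S\<close>] pos by (rule arc_iff_net_flow_pos)
  moreover have "a < n \<and> b < n \<and> (p a = b \<or> p b = a)" if "(a, b) \<in> S"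
    using that simple_graph_edge[OF sg SE] along unfolding along_tree_def by fastforce
  ultimately show ?thesis using net_flow_swap[of S x a b] by auto
qed

text \<open>The witness \<open>\<phi> z\<close> is the net flow from \<open>z\<close> to its parent.\<close>
lemma feasible_config_tree_flows:
  assumes sg: "simple_graph n E" and p: "p \<in> rooted_forests n {r} E"
    and F: "feasible_config n E g d cap S" and along: "along_tree p S"
  obtains \<phi> where "\<And>y. y < n \<Longrightarrow> \<phi> y = g y - d y + (\<Sum>c\<in>children n r p y. \<phi> c)"
    and "S = {(a, b). a < n \<and> b < n \<and> (p a = b \<and> 0 < \<phi> a \<or> p b = a \<and> \<phi> b < 0)}"
proof -
  obtain x where SE: "\<And>a b. (a, b) \<in> S \<Longrightarrow> {a, b} \<in> E" and "acyclic S"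
    and pos: "\<And>a b. (a, b) \<in> S \<Longrightarrow> 0 < x a b"
    and div: "\<And>k. k < n \<Longrightarrow> (\<Sum>j\<in>{j. (k, j) \<in> S}. x k j) - (\<Sum>i\<in>{i. (i, k) \<in> S}. x i k) = g k - d k"
    using feasible_configE[OF F] by metis
  let ?\<phi> = "\<lambda>z. net_flow S x z (p z)"
  have "?\<phi> y = g y - d y + (\<Sum>c\<in>children n r p y. ?\<phi> c)" if "y < n" for y
    using divergence_eq_tree_flows[OF sg p SE along that, of x] div[OF that] by linarith
  moreover have "S = {(a, b). a < n \<and> b < n \<and> (p a = b \<and> 0 < ?\<phi> a \<or> p b = a \<and> ?\<phi> b < 0)}"
    by (intro subset_antisym subrelI)
      (simp_all add: arcs_determined_by_tree_flows[where x = x, OF sg SE \<open>acyclic S\<close> pos along])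
  ultimately show ?thesis by (rule that)
qed

lemma feasible_config_unique_along_tree:
  assumes sg: "simple_graph n E" and p: "p \<in> rooted_forests n {r} E"
    and "feasible_config n E g d cap S1" "along_tree p S1"
    and "feasible_config n E g d cap S2" "along_tree p S2"
  shows "S1 = S2"
proof -
  obtain \<phi>1 where \<phi>1: "\<And>y. y < n \<Longrightarrow> \<phi>1 y = g y - d y + (\<Sum>c\<in>children n r p y. \<phi>1 c)"
    and S1: "S1 = {(a, b). a < n \<and> b < n \<and> (p a = b \<and> 0 < \<phi>1 a \<or> p b = a \<and> \<phi>1 b < 0)}"
    using feasible_config_tree_flows[OF sg p assms(3,4)] by blast
  obtain \<phi>2 where \<phi>2: "\<And>y. y < n \<Longrightarrow> \<phi>2 y = g y - d y + (\<Sum>c\<in>children n r p y. \<phi>2 c)"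
    and S2: "S2 = {(a, b). a < n \<and> b < n \<and> (p a = b \<and> 0 < \<phi>2 a \<or> p b = a \<and> \<phi>2 b < 0)}"
    using feasible_config_tree_flows[OF sg p assms(5,6)] by blast
  have "\<phi>1 z = \<phi>2 z" if "z < n" for z
    using children_recursion_unique[OF p \<phi>1 \<phi>2 that] .
  then show ?thesis unfolding S1 S2 by auto
qed

lemma feasible_config_along_spanning_tree:
  assumes sg: "simple_graph n E" and cg: "connected_graph n E" and r: "r < n"
    and F: "feasible_config n E g d cap S"
  shows "\<exists>p\<in>rooted_forests n {r} E. along_tree p S"
proof -
  from F have SE: "\<And>a b. (a, b) \<in> S \<Longrightarrow> {a, b} \<in> E" and nc: "\<not> has_cycle (underlying S)"
    by (auto elim: feasible_configE)
  have "underlying S \<subseteq> E" using SE unfolding underlying_def by blast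
  then obtain p where p: "p \<in> rooted_forests n {r} E"
    and tree: "\<And>a b. {a, b} \<in> underlying S \<Longrightarrow> p a = b \<or> p b = a"
    using forest_extends_to_spanning_tree[OF sg cg _ nc r] by blast
  have "{a, b} \<in> underlying S" if "(a, b) \<in> S" for a b using that unfolding underlying_def by blast
  then have "along_tree p S" using tree unfolding along_tree_def by auto
  with p show ?thesis by blast
qed

theorem lemma1:
  fixes n :: nat and E :: "nat set set" and Vg :: "nat set"
    and g d :: "nat \<Rightarrow> real" and cap :: "nat \<Rightarrow> nat \<Rightarrow> real" and r :: nat
  assumes "simple_graph n E" and "connected_graph n E"
    and "Vg \<subset> {0..<n}"
    and "\<forall>i\<in>Vg. g i > 0" and "\<forall>i\<in>{0..<n} - Vg. g i = 0"
    and "\<forall>j\<in>{0..<n} - Vg. d j > 0" and "\<forall>j\<in>Vg. d j = 0"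
    and "(\<Sum>i<n. g i) = (\<Sum>j<n. d j)"
    and "\<forall>i j. {i, j} \<in> E \<longrightarrow> cap i j \<ge> 0"
    and "r < n"
  shows "real (card {S. feasible_config n E g d cap S})
           \<le> det (mat_delete (laplacian n E) r r)"
proof -
  note sg = assms(1) and cg = assms(2) and r = assms(10)
  let ?F = "{S. feasible_config n E g d cap S}" and ?P = "rooted_forests n {r} E"
  obtain f where f: "\<And>S. S \<in> ?F \<Longrightarrow> f S \<in> ?P \<and> along_tree (f S) S"
    using feasible_config_along_spanning_tree[OF sg cg r] by (metis mem_Collect_eq)
  have "inj_on f ?F"
    by (intro inj_onI) (metis f feasible_config_unique_along_tree[OF sg] mem_Collect_eq)
  then have "card ?F \<le> card ?P"
    using f rooted_forests_finite[OF sg] by (intro card_inj_on_le) auto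
  then show ?thesis by (simp add: det_mat_delete_laplacian[OF r] det_grounded_laplacian[OF sg])
qed

end
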